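(* Let $\mathrm{SO}_2(\mathbb C)$ act on $M_2(\mathbb C)$ by left multiplication. For $M\in M_2(\mathbb C)$ set $\delta(M)=\det M$, $t(M)=\tfrac12\operatorname{tr}(M^tM)$, and define $a(M),b(M)$ by $M^tM-t(M)I=\begin{pmatrix}a(M)&b(M)\\ b(M)&-a(M)\end{pmatrix}$. Let $f=\delta^2-t^2+a^2+b^2\in\mathbb C[\delta,t,a,b]$, $R=(\mathbb C[\delta,t,a,b]/(f))_\delta$ and $U=\operatorname{Spec}(R)$. Then $U$ is a rational quotient for the left action of $\mathrm{SO}_2(\mathbb C)$ on $M_2(\mathbb C)$, i.e. the map $M\mapsto(\delta,t,a,b)$ induces an isomorphism $\mathbb C(U)\cong\mathbb C(M_2(\mathbb C))^{\mathrm{SO}_2(\mathbb C)}$. Moreover, for the induced action of $\mathrm{PSO}_2(\mathbb C)=\mathrm{SO}_2(\mathbb C)/\{\pm I\}$ on $U$ coming from the right action $M\mapsto Mh^{-1}$, identified with $\mathrm{SO}_2(\mathbb C)$ via $\pm h\mapsto h^2$, the group acts trivially on $\delta$ and $t$ and acts on the column vector $(a,b)^t$ by left multiplication.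
   Context: $\mathrm{SO}_2(\mathbb C)=\left\{\begin{pmatrix}x&y\\-y&x\end{pmatrix}: x^2+y^2=1\right\}$. For a group acting on a variety $X$, a rational quotient is a variety $Y$ whose function field is isomorphic to the field of invariant rational functions on $X$. The group $\mathrm{SO}_2(\mathbb C)\times\mathrm{SO}_2(\mathbb C)$ acts on $M_2(\mathbb C)$ by $(g,h)\cdot M=gMh^{-1}$, so the right factor acts on the quotient by the left factor, and $-I$ in the right factor acts on it trivially. *)

theory Defs
  imports "HOL-Analysis.Analysis"
begin

inductive poly_fun :: "('v \<Rightarrow> complex) set \<Rightarrow> ('v \<Rightarrow> complex) \<Rightarrow> bool"
  for C :: "('v \<Rightarrow> complex) set" where
  const: "poly_fun C (\<lambda>_. c)"
| coord: "x \<in> C \<Longrightarrow> poly_fun C x"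
| add: "poly_fun C p \<Longrightarrow> poly_fun C q \<Longrightarrow> poly_fun C (\<lambda>v. p v + q v)"
| mult: "poly_fun C p \<Longrightarrow> poly_fun C q \<Longrightarrow> poly_fun C (\<lambda>v. p v * q v)"

text \<open>Polynomial functions on M_2(C) (coordinates = matrix entries) and on
  C^4 = Spec C[delta,t,a,b] (coordinates x$1 = delta, x$2 = t, x$3 = a, x$4 = b).\<close>
definition poly_M2 :: "(complex^2^2 \<Rightarrow> complex) \<Rightarrow> bool" where
  "poly_M2 = poly_fun {(\<lambda>M. M $ i $ j) | i j. True}"

definition poly_C4 :: "(complex^4 \<Rightarrow> complex) \<Rightarrow> bool" where
  "poly_C4 = poly_fun {(\<lambda>x. x $ i) | i. True}"

definition SO2 :: "(complex^2^2) set" where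
  "SO2 = {g. g $ 1 $ 1 = g $ 2 $ 2 \<and> g $ 1 $ 2 = - (g $ 2 $ 1) \<and>
             (g $ 1 $ 1)^2 + (g $ 1 $ 2)^2 = 1}"

definition delta :: "complex^2^2 \<Rightarrow> complex" where
  "delta M = det M"

definition tt :: "complex^2^2 \<Rightarrow> complex" where
  "tt M = trace (transpose M ** M) / 2"

definition aa :: "complex^2^2 \<Rightarrow> complex" where
  "aa M = (transpose M ** M - mat (tt M)) $ 1 $ 1"

definition bb :: "complex^2^2 \<Rightarrow> complex" where
  "bb M = (transpose M ** M - mat (tt M)) $ 1 $ 2"

definition phi :: "complex^2^2 \<Rightarrow> complex^4" where
  "phi M = vector [delta M, tt M, aa M, bb M]"

definition ff :: "complex^4 \<Rightarrow> complex" where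
  "ff x = (x $ 1)^2 - (x $ 2)^2 + (x $ 3)^2 + (x $ 4)^2"

end

(*
  Write the columns of M in light-cone coordinates z_j = M_1j + i M_2j, w_j = M_1j - i M_2j.
  The rotation with x + iy = l acts by z_j -> z_j / l, w_j -> l w_j, so SO2 is the
  multiplicative group of C acting diagonally, and its invariants are generated by the products
  z_i w_j, which are t + a, t - a, b + i delta, b - i delta, subject to the single relation f = 0.
  Over t + a <> 0 the matrices with z_1 = c form a section of phi that every orbit meets, so an
  invariant fraction P/Q agrees with its restriction to the section, a polynomial in
  (delta, t, a, b) divided by a power of t + a. Conversely, if p o phi = 0 then p vanishes on
  the hypersurface f = 0 away from t + a = 0; the remainder r0 + delta r1 of p modulo f (which is
  monic of degree 2 in delta) vanishes at both roots delta = +-sqrt(t^2 - a^2 - b^2), so r0 and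
  r1 vanish on a dense set and hence everywhere. The right action is computed directly; that
  h -> h^2 is onto with kernel {+-1} is the same statement for the squaring map of C^*.
*)
theory Submission
  imports Defs "HOL-Computational_Algebra.Polynomial"
begin

lemma mat2_eq_iff:
  "(A::'a^2^2) = B \<longleftrightarrow> A$1$1 = B$1$1 \<and> A$1$2 = B$1$2 \<and> A$2$1 = B$2$1 \<and> A$2$2 = B$2$2"
  by (auto simp: vec_eq_iff forall_2)

lemma vector_4 [simp]:
  "(vector [x, y, z, w] :: ('a::zero)^4) $ 1 = x"
  "(vector [x, y, z, w] :: ('a::zero)^4) $ 2 = y"
  "(vector [x, y, z, w] :: ('a::zero)^4) $ 3 = z"
  "(vector [x, y, z, w] :: ('a::zero)^4) $ 4 = w"
  unfolding vector_def by simp_all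

lemma matrix_matrix_mult_2:
  "((A::'a::comm_ring_1^2^2) ** B) $ i $ j = A$i$1 * B$1$j + A$i$2 * B$2$j"
  by (simp add: matrix_matrix_mult_def sum_2)

lemma matrix_vector_mult_2: "((A::'a::comm_ring_1^2^2) *v v) $ i = A$i$1 * v$1 + A$i$2 * v$2"
  by (simp add: matrix_vector_mult_def sum_2)

lemma matrix_inv_eqI:
  fixes A B :: "'a::semiring_1^'n^'n"
  assumes AB: "A ** B = mat 1" and BA: "B ** A = mat 1"
  shows "matrix_inv A = B"
  unfolding matrix_inv_def
proof (rule some_equality)
  fix C assume "A ** C = mat 1 \<and> C ** A = mat 1"
  then have "C = (B ** A) ** C" using BA by (simp add: matrix_mul_lid)
  also have "\<dots> = B" using \<open>A ** C = mat 1 \<and> C ** A = mat 1\<close>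
    by (simp add: matrix_mul_assoc[symmetric] matrix_mul_rid)
  finally show "C = B" .
qed (use AB BA in simp)

lemma delta_entries: "delta M = M$1$1 * M$2$2 - M$1$2 * M$2$1"
  by (simp add: delta_def det_2)

lemma tt_entries: "tt M = (M$1$1^2 + M$2$1^2 + M$1$2^2 + M$2$2^2) / 2"
  by (simp add: tt_def trace_def matrix_matrix_mult_2 transpose_def sum_2 power2_eq_square)

lemma aa_entries: "aa M = (M$1$1^2 + M$2$1^2 - M$1$2^2 - M$2$2^2) / 2"
  by (simp add: aa_def tt_entries matrix_matrix_mult_2 transpose_def mat_def power2_eq_square
      field_simps)

lemma bb_entries: "bb M = M$1$1 * M$1$2 + M$2$1 * M$2$2"
  by (simp add: bb_def matrix_matrix_mult_2 transpose_def mat_def)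

lemma phi_nth [simp]:
  "phi M $ 1 = delta M" "phi M $ 2 = tt M" "phi M $ 3 = aa M" "phi M $ 4 = bb M"
  by (simp_all add: phi_def)

lemma phi_eqI:
  assumes "transpose M ** M = transpose N ** N" and "det M = det N"
  shows "phi M = phi N"
  using assms by (simp add: phi_def delta_def tt_def aa_def bb_def)

section \<open>Light-cone coordinates and rotations\<close>

text \<open>Light-cone coordinates: column j of the matrix has M$1$j + i M$2$j = zj and
  M$1$j - i M$2$j = wj. In these coordinates SO2 acts diagonally.\<close>
definition lightcone :: "complex \<Rightarrow> complex \<Rightarrow> complex \<Rightarrow> complex \<Rightarrow> complex^2^2" where
  "lightcone z1 w1 z2 w2 =
     vector [vector [(z1 + w1) / 2, (z2 + w2) / 2], vector [(z1 - w1) / (2*\<i>), (z2 - w2) / (2*\<i>)]]"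

lemma lightcone_coords:
  "M = lightcone (M$1$1 + \<i> * M$2$1) (M$1$1 - \<i> * M$2$1) (M$1$2 + \<i> * M$2$2) (M$1$2 - \<i> * M$2$2)"
  by (simp add: lightcone_def mat2_eq_iff field_simps)

lemma phi_lightcone:
  "phi (lightcone z1 w1 z2 w2) =
     vector [(z2*w1 - z1*w2) / (2*\<i>), (z1*w1 + z2*w2) / 2, (z1*w1 - z2*w2) / 2, (z2*w1 + z1*w2) / 2]"
  by (simp add: vec_eq_iff forall_4 lightcone_def delta_entries tt_entries aa_entries bb_entries
      field_simps power2_eq_square)

text \<open>The rotation with x + i y = l and x - i y = 1/l; this identifies SO2 with the
  multiplicative group of C.\<close>
definition rot :: "complex \<Rightarrow> complex^2^2" where
  "rot l = lightcone (1/l) l (\<i>/l) (- \<i> * l)"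

lemma rot_mult_lightcone:
  assumes "l \<noteq> 0"
  shows "rot l ** lightcone z1 w1 z2 w2 = lightcone (z1/l) (l*w1) (z2/l) (l*w2)"
  using assms by (simp add: rot_def lightcone_def mat2_eq_iff matrix_matrix_mult_2 field_simps)
    

lemma rot_mult: "l \<noteq> 0 \<Longrightarrow> m \<noteq> 0 \<Longrightarrow> rot l ** rot m = rot (l * m)"
  by (simp add: rot_mult_lightcone[of l] rot_def[of m]) (simp add: rot_def field_simps)

lemma rot_1: "rot 1 = mat 1"
  by (simp add: rot_def lightcone_def mat2_eq_iff mat_def field_simps)

lemma rot_uminus: "rot (- l) = - rot l"
  by (simp add: rot_def lightcone_def mat2_eq_iff field_simps)

lemma transpose_rot: "transpose (rot l) = rot (1/l)"
  by (cases "l = 0") (simp_all add: rot_def lightcone_def mat2_eq_iff transpose_def field_simps)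

lemma rot_param: "rot l $ 1 $ 1 + \<i> * rot l $ 1 $ 2 = l"
  by (simp add: rot_def lightcone_def field_simps)

lemma rot_inject: "rot l = rot m \<longleftrightarrow> l = m"
  by (metis rot_param)

lemma rot_in_SO2: "l \<noteq> 0 \<Longrightarrow> rot l \<in> SO2"
  by (simp add: SO2_def rot_def lightcone_def field_simps power2_eq_square)

lemma SO2E:
  assumes "g \<in> SO2"
  obtains l where "l \<noteq> 0" and "g = rot l"
proof
  let ?l = "g$1$1 + \<i> * g$1$2"
  have g: "g$2$2 = g$1$1" "g$2$1 = - g$1$2" "(g$1$1)^2 + (g$1$2)^2 = 1"
    using assms by (auto simp: SO2_def)
  have inv: "?l * (g$1$1 - \<i> * g$1$2) = 1"
    using g(3) by (simp add: algebra_simps power2_eq_square)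
  then show "?l \<noteq> 0" by auto
  then have inv': "1 / ?l = g$1$1 - \<i> * g$1$2"
    using inv by (simp add: field_simps)
  have "g = lightcone (g$1$1 + \<i> * g$2$1) (g$1$1 - \<i> * g$2$1) (g$1$2 + \<i> * g$2$2)
      (g$1$2 - \<i> * g$2$2)"
    by (rule lightcone_coords)
  also have "\<dots> = lightcone (1 / ?l) ?l (\<i> * (1 / ?l)) (- \<i> * ?l)"
    unfolding inv' by (simp add: g algebra_simps)
  also have "\<dots> = rot ?l"
    by (simp add: rot_def)
  finally show "g = rot ?l" .
qed

lemma SO2_orthogonal:
  assumes "g \<in> SO2"
  shows "transpose g ** g = mat 1" and "g ** transpose g = mat 1"
proof -
  obtain l where "l \<noteq> 0" "g = rot l" using assms by (rule SO2E)
  then show "transpose g ** g = mat 1" "g ** transpose g = mat 1"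
    by (simp_all add: transpose_rot rot_mult rot_1)
qed

lemma det_SO2: "g \<in> SO2 \<Longrightarrow> det g = 1"
  by (auto simp: SO2_def det_2 power2_eq_square)

lemma matrix_inv_SO2: "g \<in> SO2 \<Longrightarrow> matrix_inv g = transpose g"
  by (simp add: matrix_inv_eqI SO2_orthogonal)

lemma phi_mult_SO2_left:
  assumes "g \<in> SO2"
  shows "phi (g ** M) = phi M"
proof (rule phi_eqI)
  have "transpose (g ** M) ** (g ** M) = transpose M ** (transpose g ** g) ** M"
    by (simp add: matrix_transpose_mul matrix_mul_assoc)
  then show "transpose (g ** M) ** (g ** M) = transpose M ** M"
    using assms by (simp add: SO2_orthogonal matrix_mul_rid)
  show "det (g ** M) = det M"
    using assms by (simp add: det_mul det_SO2)
qed

lemma SO2_square: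
  assumes "h \<in> SO2"
  shows "h ** h \<in> SO2"
proof -
  obtain l where "l \<noteq> 0" "h = rot l" using assms by (rule SO2E)
  then show ?thesis by (simp add: rot_mult rot_in_SO2)
qed

lemma SO2_square_root:
  assumes "k \<in> SO2"
  shows "\<exists>h\<in>SO2. h ** h = k"
proof -
  obtain m where "m \<noteq> 0" "k = rot m" using assms by (rule SO2E)
  moreover have "csqrt m \<noteq> 0" and "csqrt m * csqrt m = m"
    using \<open>m \<noteq> 0\<close> by (simp_all flip: power2_eq_square)
  ultimately show ?thesis
    by (metis rot_in_SO2 rot_mult)
qed

lemma SO2_square_eq_iff:
  assumes "h \<in> SO2" and "k \<in> SO2"
  shows "h ** h = k ** k \<longleftrightarrow> k = h \<or> k = - h"
proof -
  obtain l where l: "l \<noteq> 0" "h = rot l" using assms(1) by (rule SO2E)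
  obtain m where m: "m \<noteq> 0" "k = rot m" using assms(2) by (rule SO2E)
  have "h ** h = k ** k \<longleftrightarrow> l * l = m * m"
    using l m by (simp add: rot_mult rot_inject)
  also have "\<dots> \<longleftrightarrow> m = l \<or> m = - l"
    by (auto simp: square_eq_iff)
  also have "\<dots> \<longleftrightarrow> k = h \<or> k = - h"
    using l m by (simp add: rot_inject flip: rot_uminus)
  finally show ?thesis .
qed

lemma delta_mult_SO2_right: "h \<in> SO2 \<Longrightarrow> delta (M ** transpose h) = delta M"
  by (simp add: delta_def det_mul det_SO2)

lemma tt_mult_SO2_right:
  assumes "h \<in> SO2"
  shows "tt (M ** transpose h) = tt M"
proof -
  let ?S = "transpose M ** M"
  have "trace (transpose (M ** transpose h) ** (M ** transpose h)) = trace (h ** (?S ** transpose h))"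
    by (simp add: matrix_transpose_mul matrix_mul_assoc)
  also have "\<dots> = trace ((?S ** transpose h) ** h)"
    by (rule trace_mul_sym)
  also have "\<dots> = trace (?S ** (transpose h ** h))"
    by (simp only: matrix_mul_assoc)
  also have "\<dots> = trace ?S"
    using assms by (simp add: SO2_orthogonal matrix_mul_rid)
  finally show ?thesis by (simp add: tt_def)
qed

lemma aa_bb_mult_SO2_right:
  assumes "h \<in> SO2"
  shows "vector [aa (M ** transpose h), bb (M ** transpose h)]
           = (h ** h) *v (vector [aa M, bb M] :: complex^2)"
proof -
  define x where "x = h$1$1"
  define y where "y = h$1$2"
  have h: "h$2$2 = x" "h$2$1 = - y" "x^2 + y^2 = 1"
    using assms by (auto simp: SO2_def x_def y_def)
  have "aa (M ** transpose h) = (x*x - y*y) * aa M + (x*y + y*x) * bb M"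
    by (simp add: transpose_def aa_entries bb_entries matrix_matrix_mult_2 h
        flip: x_def y_def) (simp add: field_simps power2_eq_square)
  moreover have "bb (M ** transpose h) = (- y*x - x*y) * aa M + (x*x - y*y) * bb M"
    by (simp add: transpose_def aa_entries bb_entries matrix_matrix_mult_2 h
        flip: x_def y_def) (simp add: field_simps power2_eq_square)
  ultimately show ?thesis
    by (simp add: vec_eq_iff forall_2 matrix_vector_mult_2 matrix_matrix_mult_2 h
        flip: x_def y_def)
qed

lemma poly_fun_mono: "poly_fun C p \<Longrightarrow> C \<subseteq> D \<Longrightarrow> poly_fun D p"
  by (induction rule: poly_fun.induct) (auto intro: poly_fun.intros)

lemma poly_fun_compose:
  "poly_fun C p \<Longrightarrow> (\<And>c. c \<in> C \<Longrightarrow> poly_fun D (\<lambda>v. c (h v))) \<Longrightarrow> poly_fun D (\<lambda>v. p (h v))"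
  by (induction rule: poly_fun.induct) (auto intro: poly_fun.intros)

lemma continuous_on_poly_fun:
  "poly_fun C p \<Longrightarrow> (\<And>c. c \<in> C \<Longrightarrow> continuous_on UNIV c) \<Longrightarrow> continuous_on UNIV p"
  by (induction rule: poly_fun.induct) (auto intro: continuous_intros)

lemma poly_fun_uminus: "poly_fun C p \<Longrightarrow> poly_fun C (\<lambda>v. - p v)"
  using poly_fun.mult[OF poly_fun.const[of C "-1"]] by simp

lemma poly_fun_diff: "poly_fun C p \<Longrightarrow> poly_fun C q \<Longrightarrow> poly_fun C (\<lambda>v. p v - q v)"
  using poly_fun.add[OF _ poly_fun_uminus] by simp

lemma poly_fun_power: "poly_fun C p \<Longrightarrow> poly_fun C (\<lambda>v. p v ^ n)"
  by (induction n) (auto intro: poly_fun.intros)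

lemma poly_fun_divide_const: "poly_fun C p \<Longrightarrow> poly_fun C (\<lambda>v. p v / c)"
  unfolding divide_inverse by (rule poly_fun.mult[OF _ poly_fun.const])

lemmas poly_fun_intros = poly_fun.const poly_fun.add poly_fun.mult
  poly_fun_diff poly_fun_power poly_fun_uminus poly_fun_divide_const

lemmas poly_C4_intros =
  poly_fun_intros[where C = "{(\<lambda>x::complex^4. x $ i) | i. True}", folded poly_C4_def]

lemmas poly_M2_intros =
  poly_fun_intros[where C = "{(\<lambda>M::complex^2^2. M $ i $ j) | i j. True}", folded poly_M2_def]

lemma poly_C4_coord: "poly_C4 (\<lambda>x. x $ i)"
  by (auto simp: poly_C4_def intro: poly_fun.coord)

lemma poly_M2_entry: "poly_M2 (\<lambda>M. M $ i $ j)"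
  by (auto simp: poly_M2_def intro: poly_fun.coord)

lemma continuous_on_poly_C4: "poly_C4 p \<Longrightarrow> continuous_on UNIV p"
  unfolding poly_C4_def by (erule continuous_on_poly_fun) (auto intro!: continuous_intros)

lemma continuous_on_poly_M2: "poly_M2 P \<Longrightarrow> continuous_on UNIV P"
  unfolding poly_M2_def by (erule continuous_on_poly_fun) (auto intro!: continuous_intros)

lemma poly_M2_phi_nth: "poly_M2 (\<lambda>M. phi M $ i)"
proof -
  have "poly_M2 (\<lambda>M. phi M $ 1)" "poly_M2 (\<lambda>M. phi M $ 2)"
    "poly_M2 (\<lambda>M. phi M $ 3)" "poly_M2 (\<lambda>M. phi M $ 4)"
    unfolding phi_nth delta_entries tt_entries aa_entries bb_entries
    by (intro poly_M2_intros poly_M2_entry)+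
  then show ?thesis
    using exhaust_4[of i] by auto
qed

lemma poly_M2_comp_phi: "poly_C4 q \<Longrightarrow> poly_M2 (\<lambda>M. q (phi M))"
  unfolding poly_C4_def poly_M2_def
  by (erule poly_fun_compose) (use poly_M2_phi_nth in \<open>auto simp: poly_M2_def\<close>)

lemma continuous_eq_on_dense:
  fixes f g :: "'a::topological_space \<Rightarrow> 'b::{t2_space, topological_group_add}"
  assumes "continuous_on UNIV f" "continuous_on UNIV g"
    and "closure S = UNIV" and "\<And>x. x \<in> S \<Longrightarrow> f x = g x"
  shows "f x = g x"
  using continuous_constant_on_closure[of S "\<lambda>x. f x - g x" 0 x] assms
  by (simp add: continuous_on_diff)

lemma closure_nonzero_eq_UNIV:
  fixes H :: "'a::metric_space \<Rightarrow> complex"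
  assumes curve: "\<And>x. \<exists>\<gamma> p. isCont \<gamma> 0 \<and> \<gamma> 0 = x \<and> p \<noteq> 0 \<and> (\<forall>\<epsilon>. H (\<gamma> \<epsilon>) = poly p \<epsilon>)"
  shows "closure {y. H y \<noteq> 0} = UNIV"
proof -
  have "\<exists>y. H y \<noteq> 0 \<and> dist y x < e" if "e > 0" for x e
  proof -
    obtain \<gamma> p where \<gamma>: "isCont \<gamma> 0" "\<gamma> 0 = x" "p \<noteq> 0" "\<And>\<epsilon>. H (\<gamma> \<epsilon>) = poly p \<epsilon>"
      using curve by blast
    obtain d where "d > 0" and d: "\<And>\<epsilon>. dist \<epsilon> 0 < d \<Longrightarrow> dist (\<gamma> \<epsilon>) x < e"
      using \<gamma>(1,2) \<open>e > 0\<close> unfolding continuous_at_eps_delta by metis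
    obtain d' where "d' > 0" and d': "\<And>\<epsilon>. \<epsilon> \<in> ball 0 d' \<Longrightarrow> \<epsilon> \<noteq> 0 \<Longrightarrow> poly p \<epsilon> \<noteq> 0"
      using finite_ball_avoid[OF open_UNIV poly_roots_finite[OF \<gamma>(3)], of 0] by auto
    define \<epsilon> where "\<epsilon> = complex_of_real (min d d' / 2)"
    have "dist \<epsilon> 0 < d" "\<epsilon> \<in> ball 0 d'" "\<epsilon> \<noteq> 0"
      using \<open>d > 0\<close> \<open>d' > 0\<close> by (auto simp: \<epsilon>_def)
    then show ?thesis
      using d d' \<gamma>(4) by metis
  qed
  then show ?thesis
    by (auto simp: closure_approachable)
qed

section \<open>A section of phi\<close>

text \<open>The matrix with z1 = c over a point of the hypersurface ff = 0 with t + a \<noteq> 0.\<close>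
definition slice :: "complex \<Rightarrow> complex^4 \<Rightarrow> complex^2^2" where
  "slice c y = lightcone c ((y$2 + y$3) / c) (c * (y$4 + \<i> * y$1) / (y$2 + y$3)) ((y$4 - \<i> * y$1) / c)"

lemma phi_lightcone_eqI:
  assumes "z2 * w1 = b + \<i> * d" "z1 * w2 = b - \<i> * d" "z1 * w1 = t + a" "z2 * w2 = t - a"
  shows "phi (lightcone z1 w1 z2 w2) = vector [d, t, a, b]"
proof -
  have "phi (lightcone z1 w1 z2 w2) = vector [((b + \<i> * d) - (b - \<i> * d)) / (2*\<i>),
      ((t + a) + (t - a)) / 2, ((t + a) - (t - a)) / 2, ((b + \<i> * d) + (b - \<i> * d)) / 2]"
    by (simp only: phi_lightcone assms)
  then show ?thesis
    by simp
qed

lemma phi_slice: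
  assumes "c \<noteq> 0" and "y$2 + y$3 \<noteq> 0" and "ff y = 0"
  shows "phi (slice c y) = y"
proof -
  define s where "s = y$2 + y$3"
  define u where "u = y$4 + \<i> * y$1"
  define v where "v = y$4 - \<i> * y$1"
  have uv: "u * v = (y$2 - y$3) * s"
    using assms(3) by (simp add: ff_def u_def v_def s_def algebra_simps power2_eq_square)
  have "slice c y = lightcone c (s / c) (c * u / s) (v / c)"
    by (simp add: slice_def s_def u_def v_def)
  also have "phi \<dots> = vector [y$1, y$2, y$3, y$4]"
  proof (rule phi_lightcone_eqI)
    show "c * u / s * (s / c) = y$4 + \<i> * y$1" "c * (v / c) = y$4 - \<i> * y$1"
      "c * (s / c) = y$2 + y$3"
      using assms(1,2) by (simp_all add: s_def u_def v_def)
    show "c * u / s * (v / c) = y$2 - y$3"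
      using assms(1,2) uv by (simp add: s_def)
  qed
  finally have "phi (slice c y) = vector [y$1, y$2, y$3, y$4]" .
  then show ?thesis
    by (simp add: vec_eq_iff forall_4)
qed

lemma tt_add_aa: "tt M + aa M = (M$1$1 + \<i> * M$2$1) * (M$1$1 - \<i> * M$2$1)"
  by (simp add: tt_entries aa_entries field_simps power2_eq_square)

lemma slice_phi:
  assumes "c \<noteq> 0" and "tt M + aa M \<noteq> 0"
  shows "slice c (phi M) = rot ((M$1$1 + \<i> * M$2$1) / c) ** M"
proof -
  define z1 where "z1 = M$1$1 + \<i> * M$2$1"
  define w1 where "w1 = M$1$1 - \<i> * M$2$1"
  define z2 where "z2 = M$1$2 + \<i> * M$2$2"
  define w2 where "w2 = M$1$2 - \<i> * M$2$2"
  have M: "M = lightcone z1 w1 z2 w2"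
    unfolding z1_def w1_def z2_def w2_def by (rule lightcone_coords)
  have "z1 * w1 \<noteq> 0"
    using assms(2) by (simp add: tt_add_aa z1_def w1_def)
  then show ?thesis
    using assms(1) unfolding z1_def[symmetric]
    by (simp add: M rot_mult_lightcone slice_def phi_lightcone) (simp add: field_simps)
qed

section \<open>Polynomials vanishing on the image of phi\<close>

lemma ff_phi: "ff (phi M) = 0"
  by (simp add: ff_def delta_entries tt_entries aa_entries bb_entries field_simps power2_eq_square)
   

definition disc :: "complex^4 \<Rightarrow> complex" where
  "disc y = y$2^2 - y$3^2 - y$4^2"

lemma ff_eq_disc: "ff y = y$1^2 - disc y"
  by (simp add: ff_def disc_def)

definition with_delta :: "complex^4 \<Rightarrow> complex \<Rightarrow> complex^4" where
  "with_delta y d = (\<chi> i. if i = 1 then d else y $ i)"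

lemma with_delta_nth [simp]:
  "with_delta y d $ 1 = d" "with_delta y d $ 2 = y $ 2"
  "with_delta y d $ 3 = y $ 3" "with_delta y d $ 4 = y $ 4"
  by (simp_all add: with_delta_def)

definition poly_no_delta :: "(complex^4 \<Rightarrow> complex) \<Rightarrow> bool" where
  "poly_no_delta = poly_fun {(\<lambda>x. x $ i) | i. i \<noteq> 1}"

lemma poly_no_delta_coord: "i \<noteq> 1 \<Longrightarrow> poly_no_delta (\<lambda>x. x $ i)"
  by (auto simp: poly_no_delta_def intro: poly_fun.coord)

lemma poly_C4_if_poly_no_delta: "poly_no_delta r \<Longrightarrow> poly_C4 r"
  unfolding poly_no_delta_def poly_C4_def by (erule poly_fun_mono) auto

lemma poly_no_delta_with_delta: "poly_no_delta r \<Longrightarrow> r (with_delta y d) = r y"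
  unfolding poly_no_delta_def
  by (induction rule: poly_fun.induct) (auto simp: with_delta_def)

lemmas poly_no_delta_intros =
  poly_fun_intros[where C = "{(\<lambda>x::complex^4. x $ i) | i. i \<noteq> 1}", folded poly_no_delta_def]

lemma poly_no_delta_disc: "poly_no_delta disc"
  unfolding disc_def[abs_def] by (intro poly_no_delta_intros poly_no_delta_coord) simp_all

text \<open>ff is monic of degree 2 in delta = x$1, so division by ff leaves a remainder of degree at
  most 1 in delta.\<close>
definition reduces_mod_ff :: "(complex^4 \<Rightarrow> complex) \<Rightarrow> bool" where
  "reduces_mod_ff p \<longleftrightarrow> (\<exists>q r0 r1. poly_C4 q \<and> poly_no_delta r0 \<and> poly_no_delta r1 \<and>
     (\<forall>x. p x = ff x * q x + r0 x + x$1 * r1 x))"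

lemma reduces_mod_ff_const: "reduces_mod_ff (\<lambda>_. k)"
  unfolding reduces_mod_ff_def
  by (intro exI[of _ "\<lambda>_. 0"] exI[of _ "\<lambda>_. k"] exI[of _ "\<lambda>_. 0"] conjI
      poly_C4_intros poly_no_delta_intros) simp

lemma reduces_mod_ff_coord: "reduces_mod_ff (\<lambda>x. x $ i)"
proof (cases "i = 1")
  case True
  show ?thesis
    unfolding reduces_mod_ff_def
    by (intro exI[of _ "\<lambda>_. 0"] exI[of _ "\<lambda>_. 0"] exI[of _ "\<lambda>_. 1"] conjI
        poly_C4_intros poly_no_delta_intros) (simp add: True)
next
  case False
  show ?thesis
    unfolding reduces_mod_ff_def
    by (intro exI[of _ "\<lambda>_. 0"] exI[of _ "\<lambda>x. x $ i"] exI[of _ "\<lambda>_. 0"] conjI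
        poly_C4_intros poly_no_delta_intros) (simp_all add: False poly_no_delta_coord)
qed

lemma reduces_mod_ff_add:
  assumes "reduces_mod_ff p" and "reduces_mod_ff p'"
  shows "reduces_mod_ff (\<lambda>x. p x + p' x)"
proof -
  obtain q r0 r1 where
    q: "poly_C4 q" "poly_no_delta r0" "poly_no_delta r1" "\<forall>x. p x = ff x * q x + r0 x + x$1 * r1 x"
    using assms(1) unfolding reduces_mod_ff_def by blast
  obtain q' r0' r1' where
    q': "poly_C4 q'" "poly_no_delta r0'" "poly_no_delta r1'"
      "\<forall>x. p' x = ff x * q' x + r0' x + x$1 * r1' x"
    using assms(2) unfolding reduces_mod_ff_def by blast
  show ?thesis
    unfolding reduces_mod_ff_def
  proof (intro exI conjI)
    show "poly_C4 (\<lambda>x. q x + q' x)"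
      using q(1) q'(1) by (rule poly_C4_intros)
    show "poly_no_delta (\<lambda>x. r0 x + r0' x)" "poly_no_delta (\<lambda>x. r1 x + r1' x)"
      using q q' by (simp_all add: poly_no_delta_intros)
    show "\<forall>x. p x + p' x = ff x * (q x + q' x) + (r0 x + r0' x) + x$1 * (r1 x + r1' x)"
      using q(4) q'(4) by (simp add: algebra_simps)
  qed
qed

lemma reduces_mod_ff_mult:
  assumes "reduces_mod_ff p" and "reduces_mod_ff p'" and "poly_C4 p'"
  shows "reduces_mod_ff (\<lambda>x. p x * p' x)"
proof -
  obtain q r0 r1 where
    q: "poly_C4 q" "poly_no_delta r0" "poly_no_delta r1" "\<forall>x. p x = ff x * q x + r0 x + x$1 * r1 x"
    using assms(1) unfolding reduces_mod_ff_def by blast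
  obtain q' r0' r1' where
    q': "poly_C4 q'" "poly_no_delta r0'" "poly_no_delta r1'"
      "\<forall>x. p' x = ff x * q' x + r0' x + x$1 * r1' x"
    using assms(2) unfolding reduces_mod_ff_def by blast
  show ?thesis
    unfolding reduces_mod_ff_def
  proof (intro exI conjI)
    show "poly_C4 (\<lambda>x. q x * p' x + (r0 x + x$1 * r1 x) * q' x + r1 x * r1' x)"
      using q(1-3) q'(1-3) assms(3) poly_C4_coord[of 1] poly_C4_if_poly_no_delta
      by (intro poly_C4_intros) auto
    show "poly_no_delta (\<lambda>x. r0 x * r0' x + disc x * (r1 x * r1' x))"
      "poly_no_delta (\<lambda>x. r0 x * r1' x + r1 x * r0' x)"
      using q q' poly_no_delta_disc by (simp_all add: poly_no_delta_intros)
    show "\<forall>x. p x * p' x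
      = ff x * (q x * p' x + (r0 x + x$1 * r1 x) * q' x + r1 x * r1' x)
        + (r0 x * r0' x + disc x * (r1 x * r1' x)) + x$1 * (r0 x * r1' x + r1 x * r0' x)"
    proof
      fix x
      have "p x * p' x = ff x * (q x * p' x) + (r0 x + x$1 * r1 x) * p' x"
        using q(4) by (simp add: algebra_simps)
      also have "\<dots> = ff x * (q x * p' x) + (r0 x + x$1 * r1 x) * (ff x * q' x + r0' x + x$1 * r1' x)"
        using q'(4) by simp
      \<comment> \<open>the term delta^2 r1 r1' is reduced using delta^2 = ff + disc\<close>
      also have "\<dots> = ff x * (q x * p' x + (r0 x + x$1 * r1 x) * q' x + r1 x * r1' x)
        + (r0 x * r0' x + disc x * (r1 x * r1' x)) + x$1 * (r0 x * r1' x + r1 x * r0' x)"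
        unfolding ff_eq_disc by (simp add: algebra_simps power2_eq_square)
      finally show "p x * p' x = \<dots>" .
    qed
  qed
qed

lemma poly_C4_reduces_mod_ff: "poly_C4 p \<Longrightarrow> reduces_mod_ff p"
  unfolding poly_C4_def
proof (induction rule: poly_fun.induct)
  case (mult p p')
  then show ?case
    by (simp add: reduces_mod_ff_mult poly_C4_def)
qed (auto simp: reduces_mod_ff_const reduces_mod_ff_coord reduces_mod_ff_add)

lemma zero_if_vanishes_at_square_roots:
  fixes a b c :: complex
  assumes "c \<noteq> 0" and vanish: "\<And>e. e^2 = c \<Longrightarrow> a + e * b = 0"
  shows "a = 0 \<and> b = 0"
proof -
  define d where "d = csqrt c"
  have "d \<noteq> 0" and "d^2 = c" and "(- d)^2 = c"
    using assms(1) by (simp_all add: d_def)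
  have "2 * d * b = (a + d * b) - (a + (- d) * b)"
    by (simp add: algebra_simps)
  also have "\<dots> = 0"
    by (simp only: vanish[OF \<open>d^2 = c\<close>] vanish[OF \<open>(- d)^2 = c\<close>]) simp
  finally have "b = 0"
    using \<open>d \<noteq> 0\<close> by simp
  then show ?thesis
    using vanish[OF \<open>d^2 = c\<close>] by simp
qed

lemma closure_ta_disc_nonzero: "closure {y. (y$2 + y$3) * disc y \<noteq> 0} = UNIV"
proof (rule closure_nonzero_eq_UNIV)
  fix x :: "complex^4"
  let ?\<gamma> = "\<lambda>\<epsilon>. x + \<epsilon> *s axis 2 1"
  let ?p = "[:x$2 + x$3, 1:] * [:disc x, 2 * x$2, 1:]"
  have "isCont ?\<gamma> 0"
    by (rule continuous_on_interior[of UNIV])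
      (auto simp: vector_scalar_mult_def intro!: continuous_intros)
  moreover have "(?\<gamma> \<epsilon> $ 2 + ?\<gamma> \<epsilon> $ 3) * disc (?\<gamma> \<epsilon>) = poly ?p \<epsilon>" for \<epsilon>
    by (simp add: disc_def axis_def algebra_simps power2_eq_square)
  ultimately show "\<exists>\<gamma> p. isCont \<gamma> 0 \<and> \<gamma> 0 = x \<and> p \<noteq> 0 \<and>
      (\<forall>\<epsilon>. (\<gamma> \<epsilon> $ 2 + \<gamma> \<epsilon> $ 3) * disc (\<gamma> \<epsilon>) = poly p \<epsilon>)"
    by (intro exI[of _ ?\<gamma>] exI[of _ ?p]) auto
qed

lemma poly_C4_vanishes_on_phi_iff:
  assumes "poly_C4 p"
  shows "(\<forall>M. p (phi M) = 0) \<longleftrightarrow> (\<exists>q. poly_C4 q \<and> (\<forall>x. p x = ff x * q x))"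
proof
  assume "\<exists>q. poly_C4 q \<and> (\<forall>x. p x = ff x * q x)"
  then show "\<forall>M. p (phi M) = 0"
    by (auto simp: ff_phi)
next
  assume vanish: "\<forall>M. p (phi M) = 0"
  obtain q r0 r1 where q: "poly_C4 q" and r: "poly_no_delta r0" "poly_no_delta r1"
    and p: "\<And>x. p x = ff x * q x + r0 x + x$1 * r1 x"
    using poly_C4_reduces_mod_ff[OF assms] unfolding reduces_mod_ff_def by blast
  have "r0 y = 0 \<and> r1 y = 0" if y: "(y$2 + y$3) * disc y \<noteq> 0" for y
  proof (rule zero_if_vanishes_at_square_roots)
    fix e :: complex
    assume "e^2 = disc y"
    then have "ff (with_delta y e) = 0"
      by (simp add: ff_eq_disc disc_def)
    moreover have "phi (slice 1 (with_delta y e)) = with_delta y e"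
      using y \<open>ff (with_delta y e) = 0\<close> by (intro phi_slice) auto
    then have "p (with_delta y e) = 0"
      by (metis vanish)
    ultimately show "r0 y + e * r1 y = 0"
      using p[of "with_delta y e"] by (simp add: poly_no_delta_with_delta r)
  qed (use y in simp)
  then have "r0 y = 0" "r1 y = 0" for y
    using continuous_eq_on_dense[OF continuous_on_poly_C4 continuous_on_const closure_ta_disc_nonzero]
      poly_C4_if_poly_no_delta[OF r(1)] poly_C4_if_poly_no_delta[OF r(2)] by blast+
  then show "\<exists>q. poly_C4 q \<and> (\<forall>x. p x = ff x * q x)"
    using q p by auto
qed

section \<open>Invariant rational functions\<close>

lemma lightcone_mult:
  "lightcone z1 w1 z2 w2 $ i $ j * s = lightcone (z1 * s) (w1 * s) (z2 * s) (w2 * s) $ i $ j"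
  using exhaust_2[of i] exhaust_2[of j] by (auto simp: lightcone_def field_simps)

lemma poly_C4_lightcone_nth:
  assumes "poly_C4 z1" "poly_C4 w1" "poly_C4 z2" "poly_C4 w2"
  shows "poly_C4 (\<lambda>y. lightcone (z1 y) (w1 y) (z2 y) (w2 y) $ i $ j)"
  using exhaust_2[of i] exhaust_2[of j] unfolding lightcone_def
  by (elim disjE) (simp_all add: assms poly_C4_intros)

lemma poly_M2_comp_slice:
  assumes "c \<noteq> 0" and "poly_M2 P"
  shows "\<exists>N p. poly_C4 p \<and> (\<forall>y. y$2 + y$3 \<noteq> 0 \<longrightarrow> p y = P (slice c y) * (y$2 + y$3)^N)"
  using assms(2) unfolding poly_M2_def
proof (induction rule: poly_fun.induct)
  case (const k)
  show ?case
    by (intro exI[of _ 0] exI[of _ "\<lambda>_. k"] conjI poly_C4_intros) simp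
next
  case (coord x)
  then obtain i j where x: "x = (\<lambda>M. M $ i $ j)" by auto
  let ?s = "\<lambda>y::complex^4. y$2 + y$3"
  let ?p = "\<lambda>y. lightcone (c * ?s y) (?s y * ?s y / c) (c * (y$4 + \<i> * y$1))
     ((y$4 - \<i> * y$1) * ?s y / c) $ i $ j"
  have "poly_C4 ?p"
    by (intro poly_C4_lightcone_nth poly_C4_intros poly_C4_coord)
  moreover have "?p y = slice c y $ i $ j * ?s y" if "?s y \<noteq> 0" for y
    using that assms(1) by (simp add: slice_def lightcone_mult)
  ultimately show ?case
    by (intro exI[of _ 1] exI[of _ ?p]) (simp add: x)
next
  case (add P1 P2)
  from add.IH obtain N1 p1 N2 p2 where
    p1: "poly_C4 p1" "\<forall>y. y$2 + y$3 \<noteq> 0 \<longrightarrow> p1 y = P1 (slice c y) * (y$2 + y$3)^N1" and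
    p2: "poly_C4 p2" "\<forall>y. y$2 + y$3 \<noteq> 0 \<longrightarrow> p2 y = P2 (slice c y) * (y$2 + y$3)^N2"
    by blast
  show ?case
  proof (intro exI conjI allI impI)
    show "poly_C4 (\<lambda>y. p1 y * (y$2 + y$3)^N2 + p2 y * (y$2 + y$3)^N1)"
      using p1(1) p2(1) by (simp add: poly_C4_intros poly_C4_coord)
    show "p1 y * (y$2 + y$3)^N2 + p2 y * (y$2 + y$3)^N1
        = (P1 (slice c y) + P2 (slice c y)) * (y$2 + y$3)^(N1 + N2)" if "y$2 + y$3 \<noteq> 0" for y
      using p1(2) p2(2) that by (simp add: power_add algebra_simps)
  qed
next
  case (mult P1 P2)
  from mult.IH obtain N1 p1 N2 p2 where
    p1: "poly_C4 p1" "\<forall>y. y$2 + y$3 \<noteq> 0 \<longrightarrow> p1 y = P1 (slice c y) * (y$2 + y$3)^N1" and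
    p2: "poly_C4 p2" "\<forall>y. y$2 + y$3 \<noteq> 0 \<longrightarrow> p2 y = P2 (slice c y) * (y$2 + y$3)^N2"
    by blast
  show ?case
  proof (intro exI conjI allI impI)
    show "poly_C4 (\<lambda>y. p1 y * p2 y)"
      using p1(1) p2(1) by (rule poly_C4_intros)
    show "p1 y * p2 y = P1 (slice c y) * P2 (slice c y) * (y$2 + y$3)^(N1 + N2)"
      if "y$2 + y$3 \<noteq> 0" for y
      using p1(2) p2(2) that by (simp add: power_add)
  qed
qed

lemma closure_tt_add_aa_nonzero: "closure {M. tt M + aa M \<noteq> 0} = UNIV"
proof (rule closure_nonzero_eq_UNIV)
  fix M :: "complex^2^2"
  let ?\<gamma> = "\<lambda>\<epsilon>. \<chi> i. M $ i + \<epsilon> *s axis i 1"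
  let ?p = "[:M$1$1^2 + M$2$1^2, 2 * M$1$1, 1:]"
  have "isCont ?\<gamma> 0"
    by (rule continuous_on_interior[of UNIV])
      (auto simp: vector_scalar_mult_def intro!: continuous_intros)
  moreover have "tt (?\<gamma> \<epsilon>) + aa (?\<gamma> \<epsilon>) = poly ?p \<epsilon>" for \<epsilon>
    unfolding tt_add_aa by (simp add: axis_def algebra_simps power2_eq_square)
  ultimately show "\<exists>\<gamma> p. isCont \<gamma> 0 \<and> \<gamma> 0 = M \<and> p \<noteq> 0 \<and>
      (\<forall>\<epsilon>. tt (\<gamma> \<epsilon>) + aa (\<gamma> \<epsilon>) = poly p \<epsilon>)"
    by (intro exI[of _ ?\<gamma>] exI[of _ ?p]) auto
qed

lemma SO2_invariant_fraction_slice: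
  fixes P Q :: "complex^2^2 \<Rightarrow> complex"
  assumes invariant: "\<forall>g\<in>SO2. \<forall>M. P (g ** M) * Q M = P M * Q (g ** M)"
    and "c \<noteq> 0" and "tt M + aa M \<noteq> 0"
  shows "P M * Q (slice c (phi M)) = Q M * P (slice c (phi M))"
proof -
  let ?g = "rot ((M$1$1 + \<i> * M$2$1) / c)"
  have "?g \<in> SO2"
    using assms(2,3) by (intro rot_in_SO2) (simp add: tt_add_aa)
  then have "P M * Q (?g ** M) = P (?g ** M) * Q M"
    using invariant by simp
  also have "\<dots> = Q M * P (?g ** M)"
    by (rule mult.commute)
  finally show ?thesis
    unfolding slice_phi[OF assms(2,3)] .
qed

lemma SO2_invariant_fraction_factors_through_phi:
  assumes P: "poly_M2 P" and Q: "poly_M2 Q" and "\<exists>M. Q M \<noteq> 0"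
    and invariant: "\<forall>g\<in>SO2. \<forall>M. P (g ** M) * Q M = P M * Q (g ** M)"
  shows "\<exists>p q. poly_C4 p \<and> poly_C4 q \<and> (\<exists>M. q (phi M) \<noteq> 0) \<and>
           (\<forall>M. P M * q (phi M) = Q M * p (phi M))"
proof -
  let ?s = "\<lambda>y::complex^4. y$2 + y$3"
  obtain M0 where M0: "Q M0 \<noteq> 0" "tt M0 + aa M0 \<noteq> 0"
    using continuous_eq_on_dense[OF continuous_on_poly_M2[OF Q] continuous_on_const
        closure_tt_add_aa_nonzero] \<open>\<exists>M. Q M \<noteq> 0\<close> by blast
  \<comment> \<open>the section through M0, so that Q does not vanish identically on it\<close>
  define c where "c = M0$1$1 + \<i> * M0$2$1"
  have "c \<noteq> 0"
    using M0(2) by (simp add: tt_add_aa c_def)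
  obtain N1 p1 where p1: "poly_C4 p1" "\<And>y. ?s y \<noteq> 0 \<Longrightarrow> p1 y = P (slice c y) * ?s y ^ N1"
    using poly_M2_comp_slice[OF \<open>c \<noteq> 0\<close> P] by blast
  obtain N2 q1 where q1: "poly_C4 q1" "\<And>y. ?s y \<noteq> 0 \<Longrightarrow> q1 y = Q (slice c y) * ?s y ^ N2"
    using poly_M2_comp_slice[OF \<open>c \<noteq> 0\<close> Q] by blast
  define p where "p y = p1 y * ?s y ^ N2" for y
  define q where "q y = q1 y * ?s y ^ N1" for y
  have "poly_C4 p" "poly_C4 q"
    unfolding p_def q_def using p1(1) q1(1) by (simp_all add: poly_C4_intros poly_C4_coord)
  have p_phi: "p (phi M) = P (slice c (phi M)) * (tt M + aa M) ^ (N1 + N2)"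
    and q_phi: "q (phi M) = Q (slice c (phi M)) * (tt M + aa M) ^ (N1 + N2)"
    if "tt M + aa M \<noteq> 0" for M
    using p1(2) q1(2) that by (simp_all add: p_def q_def power_add)
  have "P M * q (phi M) = Q M * p (phi M)" if "tt M + aa M \<noteq> 0" for M
    by (simp only: p_phi[OF that] q_phi[OF that] mult.assoc[symmetric]
        SO2_invariant_fraction_slice[OF invariant \<open>c \<noteq> 0\<close> that])
  moreover have "continuous_on UNIV (\<lambda>M. P M * q (phi M))" "continuous_on UNIV (\<lambda>M. Q M * p (phi M))"
    using P Q \<open>poly_C4 p\<close> \<open>poly_C4 q\<close>
    by (simp_all add: continuous_on_poly_M2 poly_M2_intros poly_M2_comp_phi)
  ultimately have "P M * q (phi M) = Q M * p (phi M)" for M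
    using continuous_eq_on_dense[OF _ _ closure_tt_add_aa_nonzero] by blast
  moreover have "q (phi M0) \<noteq> 0"
    using q_phi[OF M0(2)] slice_phi[OF \<open>c \<noteq> 0\<close> M0(2)] M0 \<open>c \<noteq> 0\<close>
    by (simp add: c_def[symmetric] rot_1 matrix_mul_lid)
  ultimately show ?thesis
    using \<open>poly_C4 p\<close> \<open>poly_C4 q\<close> by blast
qed

theorem proposition7p3:
  shows
    \<comment> \<open>the coordinates delta, t, a, b are invariant under the left action\<close>
    "(\<forall>g\<in>SO2. \<forall>M. phi (g ** M) = phi M)
    \<comment> \<open>injectivity / well-definedness: p o phi = 0 iff f divides p\<close>
   \<and> (\<forall>p. poly_C4 p \<longrightarrow>
        ((\<forall>M. p (phi M) = 0) \<longleftrightarrow> (\<exists>q. poly_C4 q \<and> (\<forall>x. p x = ff x * q x))))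
    \<comment> \<open>surjectivity: every SO2-invariant rational function P/Q on M_2 is (p/q) o phi\<close>
   \<and> (\<forall>P Q. poly_M2 P \<and> poly_M2 Q \<and> (\<exists>M. Q M \<noteq> 0) \<and>
        (\<forall>g\<in>SO2. \<forall>M. P (g ** M) * Q M = P M * Q (g ** M)) \<longrightarrow>
        (\<exists>p q. poly_C4 p \<and> poly_C4 q \<and> (\<exists>M. q (phi M) \<noteq> 0) \<and>
               (\<forall>M. P M * q (phi M) = Q M * p (phi M))))
    \<comment> \<open>identification PSO2 = SO2/{+-I} with SO2 via +-h |-> h^2\<close>
   \<and> (\<forall>h\<in>SO2. h ** h \<in> SO2)
   \<and> (\<forall>k\<in>SO2. \<exists>h\<in>SO2. h ** h = k)
   \<and> (\<forall>h\<in>SO2. \<forall>k\<in>SO2. h ** h = k ** k \<longleftrightarrow> (k = h \<or> k = - h))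
    \<comment> \<open>induced right action M |-> M h^-1 on delta, t, (a,b)^t\<close>
   \<and> (\<forall>h\<in>SO2. \<forall>M.
        delta (M ** matrix_inv h) = delta M \<and> tt (M ** matrix_inv h) = tt M \<and>
        vector [aa (M ** matrix_inv h), bb (M ** matrix_inv h)]
          = (h ** h) *v (vector [aa M, bb M] :: complex^2))"
  using SO2_invariant_fraction_factors_through_phi
  by (simp add: phi_mult_SO2_left poly_C4_vanishes_on_phi_iff SO2_square SO2_square_root
       SO2_square_eq_iff matrix_inv_SO2 delta_mult_SO2_right tt_mult_SO2_right
       aa_bb_mult_SO2_right)

end
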